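(* (1) $\mathsf{SCR}\subsetneq\mathsf{RAT}$ (every subsequence-closed relation is rational, and some rational relation is not subsequence-closed). (2) $\mathsf{SCR}\not\subseteq\mathsf{REG}$ and $\mathsf{REG}\not\subseteq\mathsf{SCR}$.
   Context: Over finite alphabets $\Sigma,\Gamma$: $u\sqsubseteq u'$ means $u$ is obtained from $u'$ by deleting some (possibly no) letters. $\mathsf{RAT}$ is the class of binary rational relations (accepted by 2-tape asynchronous finite automata, equivalently denoted by regular expressions over pairs in $(\Sigma\cup\{\varepsilon\})\times(\Gamma\cup\{\varepsilon\})$ with union, componentwise concatenation and star). $\mathsf{REG}$ is the class of binary regular relations: those $R$ for which some NFA over $\Sigma_\bot\times\Gamma_\bot$ accepts exactly $\{w_1\otimes w_2:(w_1,w_2)\in R\}$, where $w_1\otimes w_2$ is the letterwise pairing padded with a fresh symbol $\bot$ to length $\max(|w_1|,|w_2|)$. For $R\subseteq\Sigma^*\times\Gamma^*$, $R_{\sqsubseteq}=\{(u,w):u\sqsubseteq u'\text{ and }(u',w)\in R\text{ for some }u'\}$. The class of subsequence-closed relations is $\mathsf{SCR}=\{R_{\sqsubseteq}:R\in\mathsf{RAT}\}$. *)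

theory Defs
  imports Main "HOL-Library.Sublist"
begin

definition conc_rel :: "('a list \<times> 'b list) set \<Rightarrow> ('a list \<times> 'b list) set \<Rightarrow> ('a list \<times> 'b list) set" where
  "conc_rel R S = {(u @ u', w @ w') | u w u' w'. (u, w) \<in> R \<and> (u', w') \<in> S}"

inductive_set star_rel :: "('a list \<times> 'b list) set \<Rightarrow> ('a list \<times> 'b list) set"
  for R :: "('a list \<times> 'b list) set" where
  star_nil: "([], []) \<in> star_rel R"
| star_step: "(u, w) \<in> R \<Longrightarrow> (u', w') \<in> star_rel R \<Longrightarrow> (u @ u', w @ w') \<in> star_rel R"

text \<open>RAT: relations denoted by regular expressions over atoms in
  (Sigma \<union> {eps}) \<times> (Gamma \<union> {eps}), built with union, componentwise concatenation and star.\<close>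
inductive RAT :: "('a list \<times> 'b list) set \<Rightarrow> bool" where
  rat_empty: "RAT {}"
| rat_atom: "length u \<le> 1 \<Longrightarrow> length w \<le> 1 \<Longrightarrow> RAT {(u, w)}"
| rat_union: "RAT R \<Longrightarrow> RAT S \<Longrightarrow> RAT (R \<union> S)"
| rat_conc: "RAT R \<Longrightarrow> RAT S \<Longrightarrow> RAT (conc_rel R S)"
| rat_star: "RAT R \<Longrightarrow> RAT (star_rel R)"

text \<open>Padded convolution w1 \<otimes> w2, with None playing the role of the padding symbol \<bottom>.\<close>
definition conv :: "'a list \<Rightarrow> 'b list \<Rightarrow> ('a option \<times> 'b option) list" where
  "conv u w = map (\<lambda>i. (if i < length u then Some (u ! i) else None,
                        if i < length w then Some (w ! i) else None))
                  [0..<max (length u) (length w)]"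

record 'c nfa =
  states :: "nat set"
  init :: "nat set"
  trans :: "(nat \<times> 'c \<times> nat) set"
  final :: "nat set"

definition wf_nfa :: "'c nfa \<Rightarrow> bool" where
  "wf_nfa A \<longleftrightarrow> finite (states A) \<and> init A \<subseteq> states A \<and> final A \<subseteq> states A
     \<and> trans A \<subseteq> states A \<times> UNIV \<times> states A"

inductive accepts_from :: "'c nfa \<Rightarrow> nat \<Rightarrow> 'c list \<Rightarrow> bool" for A where
  acc_nil: "q \<in> final A \<Longrightarrow> accepts_from A q []"
| acc_cons: "(q, x, q') \<in> trans A \<Longrightarrow> accepts_from A q' xs \<Longrightarrow> accepts_from A q (x # xs)"

definition lang :: "'c nfa \<Rightarrow> 'c list set" where
  "lang A = {xs. \<exists>q \<in> init A. accepts_from A q xs}"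

definition REG :: "('a list \<times> 'b list) set \<Rightarrow> bool" where
  "REG R \<longleftrightarrow> (\<exists>A :: ('a option \<times> 'b option) nfa. wf_nfa A \<and>
      lang A = {conv u w | u w. (u, w) \<in> R})"

definition sub_closure :: "('a list \<times> 'b list) set \<Rightarrow> ('a list \<times> 'b list) set" where
  "sub_closure R = {(u, w). \<exists>u'. subseq u u' \<and> (u', w) \<in> R}"

definition SCR :: "('a list \<times> 'b list) set \<Rightarrow> bool" where
  "SCR S \<longleftrightarrow> (\<exists>R. RAT R \<and> S = sub_closure R)"

end

theory Submission
  imports Defs
begin

text \<open>Subsequence closure in the first component commutes with union, componentwise
  concatenation and star, and sends an atom to a union of at most two atoms; so by induction
  on rational expressions it preserves rationality, whence SCR \<subseteq> RAT. A subsequence-closed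
  relation containing (u, w) also contains ([], w), so the rational and regular singleton
  {([x], [])} is not in SCR. Finally the closure of {(a^n, b^2n)} is not regular: in the
  convolution (a, b)^n (\<bottom>, b)^n of (a^n, b^2n), pumping down inside the padded block
  yields a pair (a^n, b^k) with k < 2n, which is not in the closure.\<close>

lemma sub_closure_union: "sub_closure (R \<union> S) = sub_closure R \<union> sub_closure S"
  unfolding sub_closure_def by auto

lemma sub_closure_conc_rel:
  "sub_closure (conc_rel R S) = conc_rel (sub_closure R) (sub_closure S)"
proof (intro equalityI subsetI)
  fix p assume "p \<in> sub_closure (conc_rel R S)"
  then obtain u u1 w1 u2 w2 where "p = (u, w1 @ w2)" "subseq u (u1 @ u2)"
    and "(u1, w1) \<in> R" "(u2, w2) \<in> S"
    by (auto simp: sub_closure_def conc_rel_def)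
  moreover from \<open>subseq u (u1 @ u2)\<close> obtain v1 v2
    where "u = v1 @ v2" "subseq v1 u1" "subseq v2 u2"
    by (rule subseq_appendE)
  ultimately show "p \<in> conc_rel (sub_closure R) (sub_closure S)"
    unfolding sub_closure_def conc_rel_def by blast
next
  fix p assume "p \<in> conc_rel (sub_closure R) (sub_closure S)"
  then obtain v1 v2 u1 u2 w1 w2 where "p = (v1 @ v2, w1 @ w2)"
    and "subseq v1 u1" "(u1, w1) \<in> R" "subseq v2 u2" "(u2, w2) \<in> S"
    by (auto simp: sub_closure_def conc_rel_def)
  then show "p \<in> sub_closure (conc_rel R S)"
    unfolding sub_closure_def conc_rel_def by (blast intro: list_emb_append_mono)
qed

lemma sub_closure_star_rel: "sub_closure (star_rel R) = star_rel (sub_closure R)"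
proof -
  have "(u, w) \<in> star_rel (sub_closure R)" if "(u', w) \<in> star_rel R" "subseq u u'" for u u' w
    using that
  proof (induction u' w arbitrary: u rule: star_rel.induct)
    case star_nil
    then show ?case by (auto dest: list_emb_Nil2 intro: star_rel.star_nil)
  next
    case (star_step u1 w1 u2 w2)
    from \<open>subseq u (u1 @ u2)\<close> obtain v1 v2 where "u = v1 @ v2" "subseq v1 u1" "subseq v2 u2"
      by (rule subseq_appendE)
    with star_step show ?case
      by (auto simp: sub_closure_def intro: star_rel.star_step)
  qed
  moreover have "(u, w) \<in> sub_closure (star_rel R)" if "(u, w) \<in> star_rel (sub_closure R)" for u w
    using that
  proof (induction u w rule: star_rel.induct)
    case star_nil
    then show ?case by (auto simp: sub_closure_def intro: star_rel.star_nil)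
  next
    case (star_step u1 w1 u2 w2)
    then obtain x1 x2 where "subseq u1 x1" "(x1, w1) \<in> R" "subseq u2 x2" "(x2, w2) \<in> star_rel R"
      by (auto simp: sub_closure_def)
    then show ?case
      by (auto simp: sub_closure_def intro!: exI[of _ "x1 @ x2"] list_emb_append_mono star_rel.star_step)
  qed
  ultimately show ?thesis by (auto simp: sub_closure_def)
qed

lemma RAT_sub_closure_atom:
  assumes "length u \<le> 1" and "length w \<le> 1"
  shows "RAT (sub_closure {(u, w)})"
proof -
  have closure: "sub_closure {(u, w)} = {(v, w) | v. subseq v u}"
    by (auto simp: sub_closure_def)
  consider "u = []" | x where "u = [x]"
    using \<open>length u \<le> 1\<close> by (cases u) auto
  then show ?thesis
  proof cases
    case 1
    then have "sub_closure {(u, w)} = {([], w)}"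
      unfolding closure by (auto dest: list_emb_Nil2)
    then show ?thesis using \<open>length w \<le> 1\<close> by (simp add: rat_atom)
  next
    case (2 x)
    then have "subseq v u \<longleftrightarrow> v = [] \<or> v = [x]" for v
      by (cases v) (auto dest: list_emb_Nil2)
    then have "sub_closure {(u, w)} = {([], w)} \<union> {([x], w)}"
      unfolding closure by blast
    moreover have "RAT ({([], w)} \<union> {([x], w)})"
      using \<open>length w \<le> 1\<close> by (intro rat_union rat_atom) auto
    ultimately show ?thesis by simp
  qed
qed

lemma RAT_sub_closure: "RAT R \<Longrightarrow> RAT (sub_closure R)"
proof (induction rule: RAT.induct)
  case rat_empty
  then show ?case by (simp add: sub_closure_def RAT.rat_empty)
next
  case (rat_atom u w)
  then show ?case by (rule RAT_sub_closure_atom)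
next
  case (rat_union R S)
  then show ?case by (simp add: sub_closure_union RAT.rat_union)
next
  case (rat_conc R S)
  then show ?case by (simp add: sub_closure_conc_rel RAT.rat_conc)
next
  case (rat_star R)
  then show ?case by (simp add: sub_closure_star_rel RAT.rat_star)
qed

lemma SCR_imp_RAT: "SCR S \<Longrightarrow> RAT S"
  unfolding SCR_def using RAT_sub_closure by blast

lemma SCR_sub_closure: "RAT R \<Longrightarrow> SCR (sub_closure R)"
  unfolding SCR_def by (rule exI[of _ R]) simp

lemma SCR_subseq_closed: "SCR S \<Longrightarrow> (u, w) \<in> S \<Longrightarrow> subseq v u \<Longrightarrow> (v, w) \<in> S"
  unfolding SCR_def sub_closure_def by (auto intro: subseq_order.trans)

lemma not_SCR_singleton: "\<not> SCR {([x], w)}"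
  using SCR_subseq_closed[of "{([x], w)}" "[x]" w "[]"] by auto

definition word_nfa :: "'c list \<Rightarrow> 'c nfa" where
  "word_nfa xs = \<lparr>states = {0..length xs}, init = {0},
     trans = {(i, xs ! i, Suc i) | i. i < length xs}, final = {length xs}\<rparr>"

lemma wf_word_nfa: "wf_nfa (word_nfa xs)"
  by (auto simp: wf_nfa_def word_nfa_def)

lemma accepts_from_word_nfa:
  "i \<le> length xs \<Longrightarrow> accepts_from (word_nfa xs) i ys \<longleftrightarrow> ys = drop i xs"
proof (induction ys arbitrary: i)
  case Nil
  then show ?case by (auto simp: accepts_from.simps[of _ _ "[]"] word_nfa_def)
next
  case (Cons y ys)
  have "accepts_from (word_nfa xs) i (y # ys) \<longleftrightarrow>
      i < length xs \<and> y = xs ! i \<and> accepts_from (word_nfa xs) (Suc i) ys"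
    by (auto simp: accepts_from.simps[of _ _ "_ # _"] word_nfa_def)
  also have "\<dots> \<longleftrightarrow> y # ys = drop i xs"
  proof (cases "i < length xs")
    case True
    then show ?thesis using Cons.IH[of "Suc i"] by (simp add: Cons_nth_drop_Suc[symmetric])
  qed simp
  finally show ?case .
qed

lemma lang_word_nfa: "lang (word_nfa xs) = {xs}"
proof -
  have "init (word_nfa xs) = {0}" by (simp add: word_nfa_def)
  then show ?thesis by (simp add: lang_def accepts_from_word_nfa)
qed

lemma REG_singleton: "REG {(u, w)}"
  unfolding REG_def
  by (intro exI[of _ "word_nfa (conv u w)"]) (simp add: wf_word_nfa lang_word_nfa)

inductive path :: "'c nfa \<Rightarrow> nat \<Rightarrow> 'c list \<Rightarrow> nat \<Rightarrow> bool" for A where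
  path_Nil: "path A q [] q"
| path_Cons: "(q, x, q') \<in> trans A \<Longrightarrow> path A q' xs q'' \<Longrightarrow> path A q (x # xs) q''"

lemma path_Nil_iff [simp]: "path A q [] q' \<longleftrightarrow> q = q'"
  by (auto intro: path.intros elim: path.cases)

lemma path_Cons_iff [simp]:
  "path A q (x # xs) q'' \<longleftrightarrow> (\<exists>q'. (q, x, q') \<in> trans A \<and> path A q' xs q'')"
  by (auto intro: path.intros elim: path.cases)

lemma path_append_iff:
  "path A q (xs @ ys) q'' \<longleftrightarrow> (\<exists>q'. path A q xs q' \<and> path A q' ys q'')"
  by (induction xs arbitrary: q) auto

lemma accepts_from_iff_path:
  "accepts_from A q xs \<longleftrightarrow> (\<exists>q'. path A q xs q' \<and> q' \<in> final A)"
  by (induction xs arbitrary: q) (auto simp: accepts_from.simps[of _ _ "[]"] accepts_from.simps[of _ _ "_ # _"])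

lemma path_target_in_states:
  "path A q xs q' \<Longrightarrow> wf_nfa A \<Longrightarrow> q \<in> states A \<Longrightarrow> q' \<in> states A"
  by (induction rule: path.induct) (auto simp: wf_nfa_def)

lemma path_pump_down:
  assumes "wf_nfa A" and "q \<in> states A" and "path A q y q'"
    and "card (states A) \<le> length y"
  obtains i j where "i < j" "j \<le> length y" "path A q (take i y @ drop j y) q'"
proof -
  have "\<exists>p. path A q (take i y) p \<and> path A p (drop i y) q'" for i
    using \<open>path A q y q'\<close> path_append_iff[of A q "take i y" "drop i y" q'] by simp
  then obtain mid where mid: "\<And>i. path A q (take i y) (mid i) \<and> path A (mid i) (drop i y) q'"
    by metis
  have "finite (states A)" using \<open>wf_nfa A\<close> by (simp add: wf_nfa_def)
  moreover have "mid ` {0..length y} \<subseteq> states A"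
    using mid path_target_in_states assms(1,2) by blast
  ultimately have "card (mid ` {0..length y}) \<le> card (states A)"
    by (rule card_mono)
  also have "\<dots> < card {0..length y}"
    using \<open>card (states A) \<le> length y\<close> by simp
  finally have "\<not> inj_on mid {0..length y}"
    by (rule pigeonhole)
  then obtain i j where "i \<le> length y" "j \<le> length y" "i \<noteq> j" "mid i = mid j"
    unfolding inj_on_def by auto
  then have "min i j < max i j" "max i j \<le> length y" "mid (min i j) = mid (max i j)"
    by (auto simp: min_def max_def)
  moreover have "path A q (take (min i j) y @ drop (max i j) y) q'"
    unfolding path_append_iff
    using mid[of "min i j"] mid[of "max i j"] \<open>mid (min i j) = mid (max i j)\<close> by metis
  ultimately show thesis using that by blast
qed

lemma lang_pump_down:
  assumes "wf_nfa A" and "x @ y \<in> lang A" and "card (states A) \<le> length y"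
  obtains i j where "i < j" "j \<le> length y" "x @ take i y @ drop j y \<in> lang A"
proof -
  from \<open>x @ y \<in> lang A\<close> obtain q0 qf
    where "q0 \<in> init A" "qf \<in> final A" "path A q0 (x @ y) qf"
    by (auto simp: lang_def accepts_from_iff_path)
  then obtain p where "path A q0 x p" "path A p y qf"
    by (auto simp: path_append_iff)
  have "p \<in> states A"
    using path_target_in_states[OF \<open>path A q0 x p\<close> \<open>wf_nfa A\<close>] \<open>q0 \<in> init A\<close> \<open>wf_nfa A\<close>
    by (auto simp: wf_nfa_def)
  with \<open>path A p y qf\<close> obtain i j
    where "i < j" "j \<le> length y" "path A p (take i y @ drop j y) qf"
    using path_pump_down assms(1,3) by metis
  with \<open>path A q0 x p\<close> have "path A q0 (x @ take i y @ drop j y) qf"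
    by (auto simp: path_append_iff)
  with \<open>q0 \<in> init A\<close> \<open>qf \<in> final A\<close> have "x @ take i y @ drop j y \<in> lang A"
    by (auto simp: lang_def accepts_from_iff_path)
  with \<open>i < j\<close> \<open>j \<le> length y\<close> show thesis by (rule that)
qed

lemma map_fst_conv:
  "map fst (conv u w) = map Some u @ replicate (max (length u) (length w) - length u) None"
  by (rule nth_equalityI) (auto simp: conv_def nth_append)

lemma map_snd_conv:
  "map snd (conv u w) = map Some w @ replicate (max (length u) (length w) - length w) None"
  by (rule nth_equalityI) (auto simp: conv_def nth_append)

lemma strip_padding: "map the (filter (\<lambda>x. x \<noteq> None) (map Some u @ replicate k None)) = u"
  by (induction u) (auto simp: filter_empty_conv)

lemma conv_eq_conv_iff: "conv u w = conv u' w' \<longleftrightarrow> u = u' \<and> w = w'"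
  by (metis map_fst_conv map_snd_conv strip_padding)

lemma conv_replicate:
  "conv (replicate n a) (replicate (n + m) b) =
     replicate n (Some a, Some b) @ replicate m (None, Some b)"
  by (rule nth_equalityI) (auto simp: conv_def nth_append)

definition doubling :: "'a \<Rightarrow> 'b \<Rightarrow> ('a list \<times> 'b list) set" where
  "doubling a b = star_rel (conc_rel {([a], [b])} {([], [b])})"

lemma RAT_doubling: "RAT (doubling a b)"
  unfolding doubling_def by (intro rat_star rat_conc rat_atom) auto

lemma doubling_eq: "doubling a b = {(replicate n a, replicate (2 * n) b) | n. True}"
proof -
  have "\<exists>n. u = replicate n a \<and> w = replicate (2 * n) b" if "(u, w) \<in> doubling a b" for u w
    using that unfolding doubling_def
  proof (induction rule: star_rel.induct)
    case star_nil
    show ?case by (intro exI[of _ 0]) simp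
  next
    case (star_step u w u' w')
    then obtain n where "u' = replicate n a" "w' = replicate (2 * n) b" by blast
    moreover have "u = [a]" "w = [b, b]" using star_step(1) by (auto simp: conc_rel_def)
    ultimately show ?case by (intro exI[of _ "Suc n"]) simp
  qed
  moreover have "(replicate n a, replicate (2 * n) b) \<in> doubling a b" for n
  proof (induction n)
    case 0
    show ?case by (simp add: doubling_def star_rel.star_nil)
  next
    case (Suc n)
    have "([a], [b, b]) \<in> conc_rel {([a], [b])} {([], [b])}"
      unfolding conc_rel_def by force
    from star_rel.star_step[OF this Suc[unfolded doubling_def]] show ?case
      by (simp add: doubling_def)
  qed
  ultimately show ?thesis by auto
qed

lemma sub_closure_doublingD:
  "(replicate m a, w) \<in> sub_closure (doubling a b) \<Longrightarrow> \<exists>n \<ge> m. w = replicate (2 * n) b"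
  by (auto simp: sub_closure_def doubling_eq dest: list_emb_length)

lemma not_REG_sub_closure_doubling: "\<not> REG (sub_closure (doubling a b))"
proof
  assume "REG (sub_closure (doubling a b))"
  then obtain A :: "('a option \<times> 'b option) nfa" where "wf_nfa A"
    and L: "lang A = {conv u w | u w. (u, w) \<in> sub_closure (doubling a b)}"
    unfolding REG_def by blast
  have conv_in_lang: "conv u w \<in> lang A \<longleftrightarrow> (u, w) \<in> sub_closure (doubling a b)" for u w
    unfolding L by (auto simp: conv_eq_conv_iff)
  define n where "n = card (states A)"
  let ?y = "replicate n (None :: 'a option, Some b)"
  have "(replicate n a, replicate (n + n) b) \<in> sub_closure (doubling a b)"
    unfolding sub_closure_def doubling_eq by (auto simp flip: mult_2)
  then have "replicate n (Some a, Some b) @ ?y \<in> lang A"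
    by (simp add: conv_in_lang flip: conv_replicate)
  then obtain i j where "i < j" "j \<le> n"
    and "replicate n (Some a, Some b) @ take i ?y @ drop j ?y \<in> lang A"
    using lang_pump_down[OF \<open>wf_nfa A\<close>] by (metis length_replicate n_def order_refl)
  moreover have "take i ?y @ drop j ?y = replicate (i + (n - j)) (None, Some b)"
    using \<open>i < j\<close> \<open>j \<le> n\<close> by (simp flip: replicate_add)
  ultimately have "(replicate n a, replicate (n + (i + (n - j))) b) \<in> sub_closure (doubling a b)"
    by (simp add: conv_in_lang flip: conv_replicate)
  then obtain k where "k \<ge> n" "n + (i + (n - j)) = 2 * k"
    by (auto dest!: sub_closure_doublingD)
  with \<open>i < j\<close> \<open>j \<le> n\<close> show False by linarith
qed

theorem mainTheorem11:
  shows "((\<forall>R :: ('a::finite list \<times> 'b::finite list) set. SCR R \<longrightarrow> RAT R)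
          \<and> (\<exists>R :: ('a list \<times> 'b list) set. RAT R \<and> \<not> SCR R))
       \<and> ((\<exists>R :: ('a list \<times> 'b list) set. SCR R \<and> \<not> REG R)
          \<and> (\<exists>R :: ('a list \<times> 'b list) set. REG R \<and> \<not> SCR R))"
proof -
  let ?single = "{([undefined :: 'a], [] :: 'b list)}"
  let ?closure = "sub_closure (doubling (undefined :: 'a) (undefined :: 'b))"
  have "RAT ?single" by (rule rat_atom) simp_all
  moreover have "REG ?single" by (rule REG_singleton)
  moreover have "\<not> SCR ?single" by (rule not_SCR_singleton)
  moreover have "SCR ?closure" using RAT_doubling by (rule SCR_sub_closure)
  moreover have "\<not> REG ?closure" by (rule not_REG_sub_closure_doubling)
  ultimately show ?thesis using SCR_imp_RAT by blast
qed

end
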